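(* Let $k \in \mathbb{Z}_{\geq 0}$ and let $\gamma_X = (X, d_X(\cdot))$ be a $(2k+2)$-DMS. Put $\mathbb{V} = H_k(\mathcal{R}^{\mathrm{lev}}(\gamma_X)) : \mathbf{Dyn} \to \mathbf{Vec}$. Then for any $p, q \in \operatorname{supp} \mathbb{V}$ with $p \leq q$, we have $\mathcal{R}^{\mathrm{lev}}(\gamma_X)(p) = \mathcal{R}^{\mathrm{lev}}(\gamma_X)(q)$ as abstract simplicial complexes, and the structure map $\mathbb{V}(p \leq q)$ is an isomorphism.
   Context: A dynamic metric space (DMS) $\gamma_X = (X, d_X(\cdot))$ is a finite set $X$ with a function $d_X : \mathbb{R} \times X \times X \to \mathbb{R}_{\geq 0}$ such that for each $t$, $d_X(t)$ is a pseudometric on $X$, and for each $x,x'$ the map $t \mapsto d_X(t)(x,x')$ is continuous. An $n$-DMS is a DMS with $|X| = n$. For a compact interval $I \subset \mathbb{R}$, $d_X(I)(x,x') := \inf_{t \in I} d_X(t)(x,x')$; this is a semimetric (symmetric, zero on the diagonal). For a semimetric $d$ on $X$ and $\delta \geq 0$, the Rips complex $\mathcal{R}_\delta(d)$ is the abstract simplicial complex on $X$ whose simplices are the finite nonempty $\sigma \subseteq X$ with $d(x,y) \leq \delta$ for all $x,y \in \sigma$. $\mathbf{Dyn}$ is the poset of pairs $(I,\delta)$ with $I$ a compact interval of $\mathbb{R}$ and $\delta \ge 0$, ordered by $(I,\delta) \leq (I',\delta')$ iff $I \subseteq I'$ and $\delta \leq \delta'$. The spatiotemporal Rips filtration $\mathcal{R}^{\mathrm{lev}}(\gamma_X)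 : \mathbf{Dyn} \to \mathbf{Simp}$ sends $(I,\delta)$ to $\mathcal{R}_\delta(d_X(I))$ and relations to inclusions; $H_k(\mathcal{R}^{\mathrm{lev}}(\gamma_X))$ is its composition with degree-$k$ simplicial homology over a fixed field $\mathbb{F}$. For such a $(2k+2)$-DMS, each $\mathbb{V}(p)$ has dimension $0$ or $1$, and $\operatorname{supp}\mathbb{V} := \{p \in \mathbf{Dyn} : \mathbb{V}(p) \cong \mathbb{F}\}$. *)

theory Defs
  imports "HOL-Analysis.Analysis"
begin

definition pseudometric_on :: "'v set \<Rightarrow> ('v \<Rightarrow> 'v \<Rightarrow> real) \<Rightarrow> bool" where
  "pseudometric_on X d \<longleftrightarrow>
     (\<forall>x\<in>X. d x x = 0) \<and>
     (\<forall>x\<in>X. \<forall>y\<in>X. 0 \<le> d x y \<and> d x y = d y x) \<and>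
     (\<forall>x\<in>X. \<forall>y\<in>X. \<forall>z\<in>X. d x z \<le> d x y + d y z)"

definition is_DMS :: "'v set \<Rightarrow> (real \<Rightarrow> 'v \<Rightarrow> 'v \<Rightarrow> real) \<Rightarrow> bool" where
  "is_DMS X d \<longleftrightarrow> finite X \<and> (\<forall>t. pseudometric_on X (d t)) \<and>
     (\<forall>x\<in>X. \<forall>y\<in>X. continuous_on UNIV (\<lambda>t. d t x y))"

text \<open>An element ((a,b),delta) stands for the pair ([a,b], delta).\<close>
type_synonym dyn = "(real \<times> real) \<times> real"

definition dyn_point :: "dyn \<Rightarrow> bool" where
  "dyn_point p \<longleftrightarrow> fst (fst p) \<le> snd (fst p) \<and> 0 \<le> snd p"

definition dyn_le :: "dyn \<Rightarrow> dyn \<Rightarrow> bool" where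
  "dyn_le p q \<longleftrightarrow> {fst (fst p)..snd (fst p)} \<subseteq> {fst (fst q)..snd (fst q)} \<and> snd p \<le> snd q"

definition interval_dist :: "(real \<Rightarrow> 'v \<Rightarrow> 'v \<Rightarrow> real) \<Rightarrow> real \<Rightarrow> real \<Rightarrow> 'v \<Rightarrow> 'v \<Rightarrow> real" where
  "interval_dist d a b x y = Inf ((\<lambda>t. d t x y) ` {a..b})"

definition rips :: "'v set \<Rightarrow> ('v \<Rightarrow> 'v \<Rightarrow> real) \<Rightarrow> real \<Rightarrow> 'v set set" where
  "rips X D \<delta> = {\<sigma>. \<sigma> \<subseteq> X \<and> finite \<sigma> \<and> \<sigma> \<noteq> {} \<and> (\<forall>x\<in>\<sigma>. \<forall>y\<in>\<sigma>. D x y \<le> \<delta>)}"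

definition rips_lev :: "'v set \<Rightarrow> (real \<Rightarrow> 'v \<Rightarrow> 'v \<Rightarrow> real) \<Rightarrow> dyn \<Rightarrow> 'v set set" where
  "rips_lev X d p = rips X (interval_dist d (fst (fst p)) (snd (fst p))) (snd p)"

text \<open>Simplices are oriented by the linear order on vertices. An n-chain with
  coefficients in the field 'a is a function on simplices supported on the
  n-simplices (cardinality n+1) of K.\<close>

definition chains :: "'a::field itself \<Rightarrow> 'v set set \<Rightarrow> nat \<Rightarrow> ('v set \<Rightarrow> 'a) set" where
  "chains F K n = {c. \<forall>\<sigma>. c \<sigma> \<noteq> 0 \<longrightarrow> \<sigma> \<in> K \<and> card \<sigma> = Suc n}"

text \<open>Boundary of an n-chain: the face of sorted simplex [v_0,...,v_n] omitting v_i
  gets sign (-1)^i.\<close>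
definition bd :: "'v::linorder set set \<Rightarrow> nat \<Rightarrow> ('v set \<Rightarrow> 'a::field) \<Rightarrow> 'v set \<Rightarrow> 'a" where
  "bd K n c \<tau> = (if \<tau> \<in> K \<and> card \<tau> = n then
      (\<Sum>\<sigma>\<in>{\<sigma>\<in>K. card \<sigma> = Suc n \<and> \<tau> \<subseteq> \<sigma>}.
          (-1) ^ card {w\<in>\<sigma>. w < the_elem (\<sigma> - \<tau>)} * c \<sigma>)
    else 0)"

definition cycles :: "'a::field itself \<Rightarrow> 'v::linorder set set \<Rightarrow> nat \<Rightarrow> ('v set \<Rightarrow> 'a) set" where
  "cycles F K n = {c \<in> chains F K n. bd K n c = (\<lambda>_. 0)}"

definition boundaries :: "'a::field itself \<Rightarrow> 'v::linorder set set \<Rightarrow> nat \<Rightarrow> ('v set \<Rightarrow> 'a) set" where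
  "boundaries F K n = bd K (Suc n) ` chains F K (Suc n)"

text \<open>H_n(K; F) = cycles / boundaries is isomorphic to F: it is spanned by a single
  nonzero class.\<close>
definition homology_iso_field :: "'a::field itself \<Rightarrow> 'v::linorder set set \<Rightarrow> nat \<Rightarrow> bool" where
  "homology_iso_field F K n \<longleftrightarrow>
     (\<exists>z\<in>cycles F K n. z \<notin> boundaries F K n \<and>
        (\<forall>w\<in>cycles F K n. \<exists>r::'a. (\<lambda>\<sigma>. w \<sigma> - r * z \<sigma>) \<in> boundaries F K n))"

text \<open>For K a subcomplex of L, the map H_n(K) \<rightarrow> H_n(L), [z] \<mapsto> [z], induced by the
  inclusion is an isomorphism (injective and surjective).\<close>
definition induced_iso :: "'a::field itself \<Rightarrow> 'v::linorder set set \<Rightarrow> 'v set set \<Rightarrow> nat \<Rightarrow> bool" where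
  "induced_iso F K L n \<longleftrightarrow>
     (\<forall>z\<in>cycles F K n. z \<in> boundaries F L n \<longrightarrow> z \<in> boundaries F K n) \<and>
     (\<forall>w\<in>cycles F L n. \<exists>z\<in>cycles F K n. (\<lambda>\<sigma>. w \<sigma> - z \<sigma>) \<in> boundaries F L n)"

definition in_supp :: "'a::field itself \<Rightarrow> 'v::linorder set \<Rightarrow> (real \<Rightarrow> 'v \<Rightarrow> 'v \<Rightarrow> real) \<Rightarrow> nat \<Rightarrow> dyn \<Rightarrow> bool" where
  "in_supp F X d k p \<longleftrightarrow> dyn_point p \<and> homology_iso_field F (rips_lev X d p) k"

end

theory Submission
  imports Defs
begin

text \<open>Both Rips complexes are flag complexes of graphs on \<open>X\<close>, the graph of \<open>p\<close> a subgraph of that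
  of \<open>q\<close>. The flag complex of a graph on at most \<open>2k + 1\<close> vertices has vanishing reduced homology in
  degree \<open>k\<close>, by induction on the number of vertices: either some vertex \<open>v\<close> is adjacent to all
  others and the complex is a cone, or \<open>v\<close> has at most \<open>2k - 1\<close> neighbours, and a Mayer-Vietoris
  step combines the acyclicity of the link of \<open>v\<close> (in degree \<open>k - 1\<close>) and of the complex without \<open>v\<close>.
  Hence on \<open>2k + 2\<close> vertices, for \<open>k \<ge> 1\<close>, \<open>H\<^sub>k \<noteq> 0\<close> forces every vertex to have a non-neighbour
  (it is not a cone point) and at most one (otherwise its link has at most \<open>2k - 1\<close> vertices). So every
  vertex has exactly one non-neighbour in both graphs, and then the subgraph is the whole graph. For
  \<open>k = 0\<close>, \<open>H\<^sub>0 \<cong> F\<close> on two vertices means that they are adjacent. Equal complexes make the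
  structure map the identity.\<close>

section \<open>Augmented chains on cliques\<close>

definition face_sign :: "'v::linorder set \<Rightarrow> 'v \<Rightarrow> 'a::field" where
  "face_sign \<tau> x = (-1) ^ card {w\<in>\<tau>. w < x}"

text \<open>For \<open>n = 0\<close>
  it maps onto the empty face, i.e. it is the augmentation, so its homology is reduced homology.\<close>
definition aug_boundary :: "'v::linorder set \<Rightarrow> nat \<Rightarrow> ('v set \<Rightarrow> 'a::field) \<Rightarrow> 'v set \<Rightarrow> 'a" where
  "aug_boundary V n c \<tau> =
     (if \<tau> \<subseteq> V \<and> card \<tau> = n then (\<Sum>x\<in>V - \<tau>. face_sign \<tau> x * c (insert x \<tau>)) else 0)"

definition cone :: "'v::linorder \<Rightarrow> ('v set \<Rightarrow> 'a::field) \<Rightarrow> 'v set \<Rightarrow> 'a" where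
  "cone v c \<sigma> = (if v \<in> \<sigma> then face_sign (\<sigma> - {v}) v * c (\<sigma> - {v}) else 0)"

definition clique_chains :: "'v set \<Rightarrow> ('v \<Rightarrow> 'v \<Rightarrow> bool) \<Rightarrow> nat \<Rightarrow> ('v set \<Rightarrow> 'a::field) set" where
  "clique_chains V E n =
     {c. \<forall>\<sigma>. c \<sigma> \<noteq> 0 \<longrightarrow> \<sigma> \<subseteq> V \<and> card \<sigma> = Suc n \<and> (\<forall>x\<in>\<sigma>. \<forall>y\<in>\<sigma>. E x y)}"

definition reduced_acyclic :: "'a::field itself \<Rightarrow> 'v::linorder set \<Rightarrow> ('v \<Rightarrow> 'v \<Rightarrow> bool) \<Rightarrow> nat \<Rightarrow> bool" where
  "reduced_acyclic F V E n \<longleftrightarrow>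
     (\<forall>z \<in> (clique_chains V E n :: ('v set \<Rightarrow> 'a) set). aug_boundary V n z = (\<lambda>_. 0) \<longrightarrow>
        (\<exists>e \<in> clique_chains V E (Suc n). aug_boundary V (Suc n) e = z))"

definition neighbours :: "'v set \<Rightarrow> ('v \<Rightarrow> 'v \<Rightarrow> bool) \<Rightarrow> 'v \<Rightarrow> 'v set" where
  "neighbours V E v = {x\<in>V. x \<noteq> v \<and> E v x}"

lemma neighbours_subset: "neighbours V E v \<subseteq> V - {v}"
  unfolding neighbours_def by auto

lemma face_sign_square: "face_sign \<tau> x * face_sign \<tau> x = (1::'a::field)"
  unfolding face_sign_def by (simp add: power_mult_distrib[symmetric])

lemma face_sign_nonzero: "face_sign \<tau> x \<noteq> (0::'a::field)"
  unfolding face_sign_def by simp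

lemma face_sign_insert:
  assumes "finite \<tau>" "v \<notin> \<tau>" "x \<noteq> v"
  shows "(face_sign (insert v \<tau>) x :: 'a::field) = (if v < x then - face_sign \<tau> x else face_sign \<tau> x)"
proof (cases "v < x")
  case True
  then have "{w\<in>insert v \<tau>. w < x} = insert v {w\<in>\<tau>. w < x}" by auto
  then show ?thesis using True assms unfolding face_sign_def by simp
next
  case False
  then have "{w\<in>insert v \<tau>. w < x} = {w\<in>\<tau>. w < x}" by auto
  then show ?thesis using False unfolding face_sign_def by simp
qed

lemma clique_chainsD:
  "c \<in> clique_chains V E n \<Longrightarrow> c \<sigma> \<noteq> 0 \<Longrightarrow> \<sigma> \<subseteq> V \<and> card \<sigma> = Suc n \<and> (\<forall>x\<in>\<sigma>. \<forall>y\<in>\<sigma>. E x y)"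
  unfolding clique_chains_def by blast

lemma zero_in_clique_chains: "(\<lambda>_. 0) \<in> clique_chains V E n"
  unfolding clique_chains_def by simp

lemma clique_chains_mono: "c \<in> clique_chains W E n \<Longrightarrow> W \<subseteq> V \<Longrightarrow> c \<in> clique_chains V E n"
  unfolding clique_chains_def by blast

lemma clique_chains_pointwise:
  assumes "c \<in> clique_chains V E n" and "c' \<in> clique_chains V E n" and "f 0 0 = 0"
  shows "(\<lambda>\<sigma>. f (c \<sigma>) (c' \<sigma>)) \<in> clique_chains V E n"
  unfolding clique_chains_def
proof (intro CollectI allI impI)
  fix \<sigma> assume "f (c \<sigma>) (c' \<sigma>) \<noteq> 0"
  then have "c \<sigma> \<noteq> 0 \<or> c' \<sigma> \<noteq> 0" using assms(3) by auto
  then show "\<sigma> \<subseteq> V \<and> card \<sigma> = Suc n \<and> (\<forall>x\<in>\<sigma>. \<forall>y\<in>\<sigma>. E x y)"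
    using assms(1,2) by (auto dest: clique_chainsD)
qed

lemma clique_chains_empty: "c \<in> clique_chains {} E n \<Longrightarrow> c = (\<lambda>_. 0)"
  by (rule ext, rule ccontr) (auto dest: clique_chainsD)

lemma aug_boundary_zero: "aug_boundary V n (\<lambda>_. 0) = (\<lambda>_. 0)"
  unfolding aug_boundary_def by auto

lemma aug_boundary_add:
  "aug_boundary V n (\<lambda>\<sigma>. c \<sigma> + c' \<sigma>) \<tau> = aug_boundary V n c \<tau> + aug_boundary V n c' \<tau>"
  unfolding aug_boundary_def by (simp add: distrib_left sum.distrib)

lemma aug_boundary_diff:
  "aug_boundary V n (\<lambda>\<sigma>. c \<sigma> - c' \<sigma>) \<tau> = aug_boundary V n c \<tau> - aug_boundary V n c' \<tau>"
  unfolding aug_boundary_def by (simp add: right_diff_distrib sum_subtractf)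

lemma aug_boundary_eq_0_if_avoids:
  assumes "c \<in> clique_chains (V - {v}) E n" and "v \<in> \<tau>"
  shows "aug_boundary V n c \<tau> = 0"
proof -
  have "c (insert x \<tau>) = 0" for x using assms by (auto dest: clique_chainsD)
  then show ?thesis unfolding aug_boundary_def by simp
qed

lemma aug_boundary_restrict:
  assumes "finite V" and "W \<subseteq> V" and "c \<in> clique_chains W E n"
  shows "aug_boundary V n c = aug_boundary W n c"
proof
  fix \<tau>
  have supp: "c \<sigma> = 0" if "\<not> \<sigma> \<subseteq> W" for \<sigma> using assms(3) that by (auto dest: clique_chainsD)
  show "aug_boundary V n c \<tau> = aug_boundary W n c \<tau>"
  proof (cases "\<tau> \<subseteq> W")
    case True
    have "(\<Sum>x\<in>V - \<tau>. face_sign \<tau> x * c (insert x \<tau>)) = (\<Sum>x\<in>W - \<tau>. face_sign \<tau> x * c (insert x \<tau>))"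
      by (rule sum.mono_neutral_right) (use assms in \<open>auto dest: clique_chainsD\<close>)
    then show ?thesis using True assms(2) unfolding aug_boundary_def by auto
  next
    case False
    then show ?thesis using supp unfolding aug_boundary_def by auto
  qed
qed

lemma aug_boundary_cone_off_apex:
  fixes c :: "'v::linorder set \<Rightarrow> 'a::field"
  assumes fin: "finite V" and vV: "v \<in> V" and c: "c \<in> clique_chains (V - {v}) E n" and vt: "v \<notin> \<tau>"
  shows "aug_boundary V (Suc n) (cone v c) \<tau> = c \<tau>"
proof (cases "\<tau> \<subseteq> V \<and> card \<tau> = Suc n")
  case True
  have "face_sign \<tau> x * cone v c (insert x \<tau>) = (if x = v then c \<tau> else 0)" for x
  proof (cases "x = v")
    case True
    then have "insert x \<tau> - {v} = \<tau>" using vt by auto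
    then show ?thesis using True by (simp add: cone_def mult.assoc[symmetric] face_sign_square)
  qed (use vt in \<open>simp add: cone_def\<close>)
  then have "aug_boundary V (Suc n) (cone v c) \<tau> = (\<Sum>x\<in>V - \<tau>. if x = v then c \<tau> else 0)"
    using True unfolding aug_boundary_def by simp
  then show ?thesis using vt vV fin by simp
next
  case False
  then show ?thesis using c unfolding aug_boundary_def by (auto dest: clique_chainsD)
qed

lemma aug_boundary_cone_at_apex:
  fixes c :: "'v::linorder set \<Rightarrow> 'a::field"
  assumes fin: "finite V" and vV: "v \<in> V" and c: "c \<in> clique_chains (V - {v}) E n" and vt: "v \<in> \<tau>"
  shows "aug_boundary V (Suc n) (cone v c) \<tau> = - cone v (aug_boundary V n c) \<tau>"
proof -
  define \<rho> where "\<rho> = \<tau> - {v}"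
  have \<tau>: "\<tau> = insert v \<rho>" and vr: "v \<notin> \<rho>" unfolding \<rho>_def using vt by auto
  have dims: "(\<tau> \<subseteq> V \<and> card \<tau> = Suc n) \<longleftrightarrow> (\<rho> \<subseteq> V \<and> card \<rho> = n)"
    using \<tau> vr vV fin by (auto simp: card_insert_if dest: finite_subset)
  have cone_at: "cone v f \<tau> = face_sign \<rho> v * f \<rho>" for f :: "'v set \<Rightarrow> 'a"
    using vt unfolding cone_def \<rho>_def by simp
  show ?thesis
  proof (cases "\<rho> \<subseteq> V \<and> card \<rho> = n")
    case True
    have fr: "finite \<rho>" using True fin finite_subset by blast
    have "face_sign \<tau> x * cone v c (insert x \<tau>) = - (face_sign \<rho> v * (face_sign \<rho> x * c (insert x \<rho>)))"
      if x: "x \<in> V - \<tau>" for x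
    proof -
      have xv: "x \<noteq> v" and xr: "x \<notin> \<rho>" using x \<tau> by auto
      have "insert x \<tau> - {v} = insert x \<rho>" using \<tau> xv vr by auto
      then have "cone v c (insert x \<tau>) = face_sign (insert x \<rho>) v * c (insert x \<rho>)"
        using vt unfolding cone_def by simp
      moreover have "(face_sign \<tau> x :: 'a) = (if v < x then - face_sign \<rho> x else face_sign \<rho> x)"
        using face_sign_insert[OF fr vr xv] \<tau> by simp
      moreover have "(face_sign (insert x \<rho>) v :: 'a) = (if x < v then - face_sign \<rho> v else face_sign \<rho> v)"
        using face_sign_insert[OF fr xr, of v] xv by simp
      ultimately show ?thesis using xv by auto
    qed
    then have "aug_boundary V (Suc n) (cone v c) \<tau>
        = - (face_sign \<rho> v * (\<Sum>x\<in>V - \<tau>. face_sign \<rho> x * c (insert x \<rho>)))"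
      using True dims unfolding aug_boundary_def by (simp add: sum_negf sum_distrib_left)
    also have "(\<Sum>x\<in>V - \<tau>. face_sign \<rho> x * c (insert x \<rho>)) = aug_boundary V n c \<rho>"
    proof -
      have "V - \<rho> = insert v (V - \<tau>)" and "v \<notin> V - \<tau>" using \<tau> vV vr by auto
      moreover have "c (insert v \<rho>) = 0" using c by (auto dest: clique_chainsD)
      ultimately show ?thesis using True fin unfolding aug_boundary_def by simp
    qed
    finally show ?thesis unfolding cone_at .
  next
    case False
    then show ?thesis using dims unfolding cone_at aug_boundary_def by auto
  qed
qed

lemma aug_boundary_cone:
  fixes c :: "'v::linorder set \<Rightarrow> 'a::field"
  assumes "finite V" and "v \<in> V" and c: "c \<in> clique_chains (V - {v}) E n"
  shows "aug_boundary V (Suc n) (cone v c) \<tau> = c \<tau> - cone v (aug_boundary V n c) \<tau>"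
proof (cases "v \<in> \<tau>")
  case True
  then have "c \<tau> = 0" using c by (auto dest: clique_chainsD)
  then show ?thesis using aug_boundary_cone_at_apex[OF assms True] by simp
next
  case False
  then show ?thesis using aug_boundary_cone_off_apex[OF assms False] by (simp add: cone_def)
qed

lemma clique_chain_split_at_vertex:
  fixes z :: "'v::linorder set \<Rightarrow> 'a::field"
  assumes z: "z \<in> clique_chains V E (Suc m)"
  obtains a b where "a \<in> clique_chains (neighbours V E v) E m"
    and "b \<in> clique_chains (V - {v}) E (Suc m)" and "\<And>\<sigma>. z \<sigma> = cone v a \<sigma> + b \<sigma>"
proof -
  define a where "a \<sigma> = (if v \<notin> \<sigma> then face_sign \<sigma> v * z (insert v \<sigma>) else 0)" for \<sigma>
  define b where "b \<sigma> = (if v \<in> \<sigma> then 0 else z \<sigma>)" for \<sigma>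
  have "a \<in> clique_chains (neighbours V E v) E m"
    unfolding clique_chains_def
  proof (intro CollectI allI impI)
    fix \<sigma> assume "a \<sigma> \<noteq> 0"
    then have v\<sigma>: "v \<notin> \<sigma>" and "z (insert v \<sigma>) \<noteq> 0" unfolding a_def by (auto split: if_splits)
    then have "insert v \<sigma> \<subseteq> V" and card: "card (insert v \<sigma>) = Suc (Suc m)"
      and "\<forall>x\<in>insert v \<sigma>. \<forall>y\<in>insert v \<sigma>. E x y"
      using clique_chainsD[OF z] by auto
    moreover have "finite (insert v \<sigma>)" by (rule card_ge_0_finite) (simp add: card)
    ultimately show "\<sigma> \<subseteq> neighbours V E v \<and> card \<sigma> = Suc m \<and> (\<forall>x\<in>\<sigma>. \<forall>y\<in>\<sigma>. E x y)"
      using v\<sigma> unfolding neighbours_def by auto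
  qed
  moreover have "b \<in> clique_chains (V - {v}) E (Suc m)"
    using z unfolding clique_chains_def b_def by auto
  moreover have "z \<sigma> = cone v a \<sigma> + b \<sigma>" for \<sigma>
  proof (cases "v \<in> \<sigma>")
    case True
    then have "insert v (\<sigma> - {v}) = \<sigma>" by auto
    then show ?thesis using True unfolding cone_def a_def b_def
      by (simp add: mult.assoc[symmetric] face_sign_square)
  qed (simp add: cone_def b_def)
  ultimately show ?thesis by (rule that)
qed

lemma cycle_split_at_vertex:
  fixes a b :: "'v::linorder set \<Rightarrow> 'a::field"
  assumes fin: "finite V" and vV: "v \<in> V"
    and a: "a \<in> clique_chains (V - {v}) E m" and b: "b \<in> clique_chains (V - {v}) E (Suc m)"
    and cycle: "aug_boundary V (Suc m) (\<lambda>\<sigma>. cone v a \<sigma> + b \<sigma>) = (\<lambda>_. 0)"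
  shows "aug_boundary V m a = (\<lambda>_. 0)" and "aug_boundary V (Suc m) b \<tau> = - a \<tau>"
proof -
  \<comment> \<open>On faces through \<open>v\<close> only the term \<open>v * \<partial>a\<close> of \<open>\<partial>(v * a + b) = a - v * \<partial>a + \<partial>b\<close> survives.\<close>
  have sum0: "a \<tau> - cone v (aug_boundary V m a) \<tau> + aug_boundary V (Suc m) b \<tau> = 0" for \<tau>
    using fun_cong[OF cycle, of \<tau>] by (simp add: aug_boundary_add aug_boundary_cone[OF fin vV a])
  show bda: "aug_boundary V m a = (\<lambda>_. 0)"
  proof
    fix \<sigma>
    show "aug_boundary V m a \<sigma> = 0"
    proof (cases "v \<in> \<sigma>")
      case True
      then show ?thesis by (rule aug_boundary_eq_0_if_avoids[OF a])
    next
      case False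
      have "a (insert v \<sigma>) = 0" using a by (auto dest: clique_chainsD)
      then have "cone v (aug_boundary V m a) (insert v \<sigma>) = 0"
        using sum0[of "insert v \<sigma>"] aug_boundary_eq_0_if_avoids[OF b, of "insert v \<sigma>"] by simp
      moreover have "insert v \<sigma> - {v} = \<sigma>" using False by auto
      ultimately show ?thesis by (simp add: cone_def face_sign_nonzero)
    qed
  qed
  show "aug_boundary V (Suc m) b \<tau> = - a \<tau>"
    using sum0[of \<tau>] unfolding bda by (simp add: cone_def add_eq_0_iff)
qed

lemma reduced_acyclic_subsetD:
  fixes F :: "'a::field itself" and z :: "'v::linorder set \<Rightarrow> 'a"
  assumes "reduced_acyclic F W E n" and "finite V" and "W \<subseteq> V"
    and z: "z \<in> clique_chains W E n" and "aug_boundary V n z = (\<lambda>_. 0)"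
  obtains e where "e \<in> clique_chains W E (Suc n)" and "aug_boundary V (Suc n) e = z"
proof -
  have "aug_boundary W n z = (\<lambda>_. 0)" using aug_boundary_restrict[OF assms(2,3) z] assms(5) by simp
  then obtain e where e: "e \<in> clique_chains W E (Suc n)" and "aug_boundary W (Suc n) e = z"
    using assms(1) z unfolding reduced_acyclic_def by blast
  moreover have "aug_boundary V (Suc n) e = aug_boundary W (Suc n) e"
    using aug_boundary_restrict[OF assms(2,3) e] .
  ultimately show ?thesis using that by simp
qed

lemma reduced_acyclic_if_cycles_vanish:
  fixes F :: "'a::field itself"
  assumes "\<And>z :: 'v::linorder set \<Rightarrow> 'a. z \<in> clique_chains V E n \<Longrightarrow> aug_boundary V n z = (\<lambda>_. 0) \<Longrightarrow> z = (\<lambda>_. 0)"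
  shows "reduced_acyclic F V E n"
proof (unfold reduced_acyclic_def, intro ballI impI)
  fix z :: "'v set \<Rightarrow> 'a" assume "z \<in> clique_chains V E n" "aug_boundary V n z = (\<lambda>_. 0)"
  then have "z = (\<lambda>_. 0)" by (rule assms)
  then show "\<exists>e\<in>clique_chains V E (Suc n). aug_boundary V (Suc n) e = z"
    using zero_in_clique_chains aug_boundary_zero by blast
qed

lemma reduced_acyclic_empty: "reduced_acyclic F {} E n"
  by (rule reduced_acyclic_if_cycles_vanish) (rule clique_chains_empty)

lemma reduced_acyclic_0_if_card_le_1:
  fixes F :: "'a::field itself" and V :: "'v::linorder set"
  assumes "finite V" and "card V \<le> 1"
  shows "reduced_acyclic F V E 0"
proof (rule reduced_acyclic_if_cycles_vanish, rule ext, rule ccontr)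
  fix z :: "'v set \<Rightarrow> 'a" and \<sigma>
  assume z: "z \<in> clique_chains V E 0" and cycle: "aug_boundary V 0 z = (\<lambda>_. 0)" and "z \<sigma> \<noteq> 0"
  then have "\<sigma> \<subseteq> V" and "card \<sigma> = 1" using clique_chainsD[OF z] by auto
  then have "V = \<sigma>" using card_seteq[OF assms(1)] assms(2) by (metis le_trans)
  moreover obtain u where "\<sigma> = {u}" using \<open>card \<sigma> = 1\<close> by (rule card_1_singletonE)
  ultimately have "aug_boundary V 0 z {} = z \<sigma>" unfolding aug_boundary_def face_sign_def by simp
  then show False using cycle \<open>z \<sigma> \<noteq> 0\<close> by simp
qed

section \<open>Acyclicity of flag complexes on few vertices\<close>

locale refl_sym_graph =
  fixes E :: "'v::linorder \<Rightarrow> 'v \<Rightarrow> bool"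
  assumes refl: "E x x" and sym: "E x y \<longleftrightarrow> E y x"
begin

lemma cone_in_clique_chains:
  assumes c: "c \<in> clique_chains (neighbours V E v) E n" and vV: "v \<in> V"
  shows "cone v c \<in> clique_chains V E (Suc n)"
  unfolding clique_chains_def
proof (intro CollectI allI impI)
  fix \<sigma> assume "cone v c \<sigma> \<noteq> 0"
  then have v\<sigma>: "v \<in> \<sigma>" and "c (\<sigma> - {v}) \<noteq> 0" unfolding cone_def by (auto split: if_splits)
  then have sub: "\<sigma> - {v} \<subseteq> neighbours V E v" and card: "card (\<sigma> - {v}) = Suc n"
    and clique: "\<forall>x\<in>\<sigma> - {v}. \<forall>y\<in>\<sigma> - {v}. E x y"
    using clique_chainsD[OF c] by auto
  have "finite (\<sigma> - {v})" by (rule card_ge_0_finite) (simp add: card)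
  then have "card \<sigma> = Suc (Suc n)" using card.remove[of \<sigma> v] card v\<sigma> by simp
  moreover have "\<sigma> \<subseteq> V" using sub vV v\<sigma> unfolding neighbours_def by auto
  moreover have "E x y" if "x \<in> \<sigma>" "y \<in> \<sigma>" for x y
    using that sub clique refl[of v] sym[of x v] unfolding neighbours_def
    by (cases "x = v"; cases "y = v") auto
  ultimately show "\<sigma> \<subseteq> V \<and> card \<sigma> = Suc (Suc n) \<and> (\<forall>x\<in>\<sigma>. \<forall>y\<in>\<sigma>. E x y)" by blast
qed

lemma reduced_acyclic_if_cone_vertex:
  fixes F :: "'a::field itself"
  assumes fin: "finite V" and vV: "v \<in> V" and apex: "neighbours V E v = V - {v}"
  shows "reduced_acyclic F V E (Suc m)"
proof (unfold reduced_acyclic_def, intro ballI impI)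
  fix z :: "'v set \<Rightarrow> 'a"
  assume z: "z \<in> clique_chains V E (Suc m)" and cycle: "aug_boundary V (Suc m) z = (\<lambda>_. 0)"
  obtain a b where a: "a \<in> clique_chains (neighbours V E v) E m"
    and b: "b \<in> clique_chains (V - {v}) E (Suc m)" and z_eq: "\<And>\<sigma>. z \<sigma> = cone v a \<sigma> + b \<sigma>"
    using clique_chain_split_at_vertex[OF z, of v] by blast
  have "z = (\<lambda>\<sigma>. cone v a \<sigma> + b \<sigma>)" using z_eq by auto
  then have bd_b: "aug_boundary V (Suc m) b \<tau> = - a \<tau>" for \<tau>
    using cycle_split_at_vertex(2)[OF fin vV clique_chains_mono[OF a neighbours_subset] b] cycle by simp
  have "cone v b \<in> clique_chains V E (Suc (Suc m))"
    using cone_in_clique_chains[of b V v] b apex vV by simp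
  moreover have "aug_boundary V (Suc (Suc m)) (cone v b) = z"
  proof
    fix \<tau>
    have "aug_boundary V (Suc (Suc m)) (cone v b) \<tau> = b \<tau> - cone v (aug_boundary V (Suc m) b) \<tau>"
      by (rule aug_boundary_cone[OF fin vV b])
    also have "cone v (aug_boundary V (Suc m) b) \<tau> = - cone v a \<tau>"
      unfolding cone_def bd_b by simp
    finally show "aug_boundary V (Suc (Suc m)) (cone v b) \<tau> = z \<tau>" using z_eq by simp
  qed
  ultimately show "\<exists>e\<in>clique_chains V E (Suc (Suc m)). aug_boundary V (Suc (Suc m)) e = z" by blast
qed

text \<open>A Mayer-Vietoris argument for the cover of the flag complex by the star of \<open>v\<close> and the
  complex on \<open>V - {v}\<close>, which intersect in the link of \<open>v\<close>.\<close>
lemma reduced_acyclic_if_link_and_deletion: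
  fixes F :: "'a::field itself"
  assumes fin: "finite V" and vV: "v \<in> V"
    and link: "reduced_acyclic F (neighbours V E v) E m"
    and deletion: "reduced_acyclic F (V - {v}) E (Suc m)"
  shows "reduced_acyclic F V E (Suc m)"
proof (unfold reduced_acyclic_def, intro ballI impI)
  fix z :: "'v set \<Rightarrow> 'a"
  assume z: "z \<in> clique_chains V E (Suc m)" and cycle: "aug_boundary V (Suc m) z = (\<lambda>_. 0)"
  obtain a b where a: "a \<in> clique_chains (neighbours V E v) E m"
    and b: "b \<in> clique_chains (V - {v}) E (Suc m)" and z_eq: "\<And>\<sigma>. z \<sigma> = cone v a \<sigma> + b \<sigma>"
    using clique_chain_split_at_vertex[OF z, of v] by blast
  have NV: "neighbours V E v \<subseteq> V" unfolding neighbours_def by blast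
  have "z = (\<lambda>\<sigma>. cone v a \<sigma> + b \<sigma>)" using z_eq by auto
  then have bd_a: "aug_boundary V m a = (\<lambda>_. 0)" and bd_b: "aug_boundary V (Suc m) b \<tau> = - a \<tau>" for \<tau>
    using cycle_split_at_vertex[OF fin vV clique_chains_mono[OF a neighbours_subset] b] cycle by simp_all
  obtain c where c: "c \<in> clique_chains (neighbours V E v) E (Suc m)"
    and bd_c: "aug_boundary V (Suc m) c = a"
    using reduced_acyclic_subsetD[OF link fin NV a bd_a] .
  have c': "c \<in> clique_chains (V - {v}) E (Suc m)" using clique_chains_mono[OF c neighbours_subset] .
  have bc: "(\<lambda>\<sigma>. b \<sigma> + c \<sigma>) \<in> clique_chains (V - {v}) E (Suc m)"
    using clique_chains_pointwise[OF b c', of "(+)"] by simp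
  have "aug_boundary V (Suc m) (\<lambda>\<sigma>. b \<sigma> + c \<sigma>) = (\<lambda>_. 0)"
    using bd_b bd_c by (simp add: aug_boundary_add fun_eq_iff)
  then obtain e where e: "e \<in> clique_chains (V - {v}) E (Suc (Suc m))"
    and bd_e: "aug_boundary V (Suc (Suc m)) e = (\<lambda>\<sigma>. b \<sigma> + c \<sigma>)"
    using reduced_acyclic_subsetD[OF deletion fin Diff_subset bc] by blast
  have "(\<lambda>\<sigma>. e \<sigma> - cone v c \<sigma>) \<in> clique_chains V E (Suc (Suc m))"
    using clique_chains_pointwise[OF clique_chains_mono[OF e Diff_subset] cone_in_clique_chains[OF c vV],
        of "(-)"] by simp
  moreover have "aug_boundary V (Suc (Suc m)) (\<lambda>\<sigma>. e \<sigma> - cone v c \<sigma>) = z"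
  proof
    fix \<tau>
    have "aug_boundary V (Suc (Suc m)) (\<lambda>\<sigma>. e \<sigma> - cone v c \<sigma>) \<tau> = (b \<tau> + c \<tau>) - (c \<tau> - cone v a \<tau>)"
      by (simp add: aug_boundary_diff aug_boundary_cone[OF fin vV c'] bd_e bd_c)
    also have "\<dots> = z \<tau>" using z_eq by simp
    finally show "aug_boundary V (Suc (Suc m)) (\<lambda>\<sigma>. e \<sigma> - cone v c \<sigma>) \<tau> = z \<tau>" .
  qed
  ultimately show "\<exists>e\<in>clique_chains V E (Suc (Suc m)). aug_boundary V (Suc (Suc m)) e = z" by blast
qed

lemma reduced_acyclic_if_card_le:
  fixes F :: "'a::field itself"
  assumes "finite V" and "card V \<le> 2 * k + 1"
  shows "reduced_acyclic F V E k"
  using assms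
proof (induction "card V" arbitrary: V k rule: less_induct)
  case less
  note fin = less.prems(1)
  show ?case
  proof (cases k)
    case 0
    then show ?thesis using reduced_acyclic_0_if_card_le_1 less.prems by simp
  next
    case (Suc m)
    show ?thesis
    proof (cases "V = {}")
      case True
      then show ?thesis by (simp add: reduced_acyclic_empty)
    next
      case False
      then obtain v where vV: "v \<in> V" by blast
      show ?thesis
      proof (cases "neighbours V E v = V - {v}")
        case True
        then show ?thesis unfolding Suc by (rule reduced_acyclic_if_cone_vertex[OF fin vV])
      next
        case False
        have card_del: "card (V - {v}) = card V - 1" and "card V > 0"
          using vV fin by (auto simp: card_gt_0_iff)
        have fin_N: "finite (neighbours V E v)" using fin unfolding neighbours_def by simp
        have "card (neighbours V E v) < card (V - {v})"
          using False neighbours_subset[of V E v] fin by (intro psubset_card_mono) auto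
        then have "card (neighbours V E v) < card V" and "card (neighbours V E v) \<le> 2 * m + 1"
          using card_del less.prems(2) Suc by linarith+
        then have link: "reduced_acyclic F (neighbours V E v) E m" using less.hyps fin_N by blast
        have "card (V - {v}) < card V" and "card (V - {v}) \<le> 2 * Suc m + 1"
          using card_del \<open>card V > 0\<close> less.prems(2) Suc by simp_all
        then have "reduced_acyclic F (V - {v}) E (Suc m)" using less.hyps fin by blast
        with link show ?thesis unfolding Suc by (rule reduced_acyclic_if_link_and_deletion[OF fin vV])
      qed
    qed
  qed
qed

lemma non_neighbour_if_not_reduced_acyclic:
  fixes F :: "'a::field itself"
  assumes "finite V" and "\<not> reduced_acyclic F V E (Suc m)" and "v \<in> V"
  obtains u where "u \<in> V" and "u \<noteq> v" and "\<not> E v u"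
proof -
  have "neighbours V E v \<noteq> V - {v}"
    using reduced_acyclic_if_cone_vertex[OF assms(1,3)] assms(2) by blast
  then show ?thesis using that unfolding neighbours_def by blast
qed

lemma non_neighbour_unique_if_not_reduced_acyclic:
  fixes F :: "'a::field itself"
  assumes fin: "finite V" and card: "card V = 2 * Suc m + 2"
    and not_acyclic: "\<not> reduced_acyclic F V E (Suc m)"
    and vV: "v \<in> V" and "u \<in> V" and "w \<in> V" and "\<not> E v u" and "\<not> E v w"
  shows "u = w"
proof (rule ccontr)
  assume "u \<noteq> w"
  moreover have "u \<noteq> v" and "w \<noteq> v" using refl assms by auto
  ultimately have "card (V - {v, u, w}) = 2 * m + 1" using assms by (simp add: card_Diff_subset)
  moreover have "neighbours V E v \<subseteq> V - {v, u, w}" using assms unfolding neighbours_def by auto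
  ultimately have "card (neighbours V E v) \<le> 2 * m + 1" using fin by (metis card_mono finite_Diff)
  then have "reduced_acyclic F (neighbours V E v) E m"
    using fin by (intro reduced_acyclic_if_card_le) (simp_all add: neighbours_def)
  moreover have "reduced_acyclic F (V - {v}) E (Suc m)"
    using fin card vV by (intro reduced_acyclic_if_card_le) simp_all
  ultimately show False using reduced_acyclic_if_link_and_deletion[OF fin vV] not_acyclic by blast
qed

end

section \<open>Flag complexes with homology of rank one\<close>

definition clique_complex :: "'v set \<Rightarrow> ('v \<Rightarrow> 'v \<Rightarrow> bool) \<Rightarrow> 'v set set" where
  "clique_complex X E = {\<sigma>. \<sigma> \<subseteq> X \<and> finite \<sigma> \<and> \<sigma> \<noteq> {} \<and> (\<forall>x\<in>\<sigma>. \<forall>y\<in>\<sigma>. E x y)}"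

lemma chains_clique_complex: "chains F (clique_complex X E) n = clique_chains X E n"
proof -
  have "finite \<sigma>" if "card \<sigma> = Suc n" for \<sigma> :: "'a set"
    using that by (intro card_ge_0_finite) simp
  then have "(\<sigma> \<in> clique_complex X E \<and> card \<sigma> = Suc n) \<longleftrightarrow>
      (\<sigma> \<subseteq> X \<and> card \<sigma> = Suc n \<and> (\<forall>x\<in>\<sigma>. \<forall>y\<in>\<sigma>. E x y))" for \<sigma>
    unfolding clique_complex_def by auto
  then show ?thesis unfolding chains_def clique_chains_def by simp
qed

lemma bd_zero: "bd K n (\<lambda>_. 0::'a::field) = (\<lambda>_. 0)"
  unfolding bd_def by (rule ext) simp

lemma cofaces_in_clique_complex:
  assumes "finite \<tau>"
  shows "{\<sigma> \<in> clique_complex X E. card \<sigma> = Suc (card \<tau>) \<and> \<tau> \<subseteq> \<sigma>}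
    = (\<lambda>x. insert x \<tau>) ` {x \<in> X - \<tau>. insert x \<tau> \<in> clique_complex X E}"
proof (intro equalityI subsetI)
  fix \<sigma> assume "\<sigma> \<in> {\<sigma> \<in> clique_complex X E. card \<sigma> = Suc (card \<tau>) \<and> \<tau> \<subseteq> \<sigma>}"
  then have K: "\<sigma> \<in> clique_complex X E" and card: "card \<sigma> = Suc (card \<tau>)" and "\<tau> \<subseteq> \<sigma>" by auto
  then have "card (\<sigma> - \<tau>) = 1" using assms by (simp add: card_Diff_subset)
  then obtain x where "\<sigma> - \<tau> = {x}" by (rule card_1_singletonE)
  then have "\<sigma> = insert x \<tau>" and "x \<notin> \<tau>" and "x \<in> X"
    using \<open>\<tau> \<subseteq> \<sigma>\<close> K unfolding clique_complex_def by auto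
  then show "\<sigma> \<in> (\<lambda>x. insert x \<tau>) ` {x \<in> X - \<tau>. insert x \<tau> \<in> clique_complex X E}" using K by auto
qed (use assms in auto)

lemma bd_clique_complex:
  fixes c :: "'v::linorder set \<Rightarrow> 'a::field"
  assumes fin: "finite X" and c: "c \<in> clique_chains X E n" and "0 < n"
  shows "bd (clique_complex X E) n c = aug_boundary X n c"
proof
  fix \<tau>
  let ?K = "clique_complex X E"
  have supp: "c \<sigma> = 0" if "\<sigma> \<notin> ?K" for \<sigma>
    using c that chains_clique_complex[of "TYPE('a)" X E n] unfolding chains_def by blast
  show "bd ?K n c \<tau> = aug_boundary X n c \<tau>"
  proof (cases "\<tau> \<in> ?K \<and> card \<tau> = n")
    case True
    then have \<tau>X: "\<tau> \<subseteq> X" and fin\<tau>: "finite \<tau>" and card: "card \<tau> = n"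
      unfolding clique_complex_def by auto
    define T where "T = {x \<in> X - \<tau>. insert x \<tau> \<in> ?K}"
    have sign: "{w \<in> insert x \<tau>. w < the_elem (insert x \<tau> - \<tau>)} = {w \<in> \<tau>. w < x}" if "x \<in> T" for x
    proof -
      have "insert x \<tau> - \<tau> = {x}" using that unfolding T_def by auto
      then show ?thesis by auto
    qed
    have "bd ?K n c \<tau> = (\<Sum>\<sigma>\<in>(\<lambda>x. insert x \<tau>) ` T. (-1) ^ card {w\<in>\<sigma>. w < the_elem (\<sigma> - \<tau>)} * c \<sigma>)"
      using True cofaces_in_clique_complex[OF fin\<tau>, of X E] unfolding bd_def T_def card by simp
    also have "\<dots> = (\<Sum>x\<in>T. face_sign \<tau> x * c (insert x \<tau>))"
      using sign by (subst sum.reindex) (auto simp: inj_on_def T_def face_sign_def intro!: sum.cong)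
    also have "\<dots> = (\<Sum>x\<in>X - \<tau>. face_sign \<tau> x * c (insert x \<tau>))"
      by (rule sum.mono_neutral_left) (use fin supp in \<open>auto simp: T_def\<close>)
    also have "\<dots> = aug_boundary X n c \<tau>" using \<tau>X card unfolding aug_boundary_def by simp
    finally show ?thesis .
  next
    case False
    have "c (insert x \<tau>) = 0" if "\<tau> \<subseteq> X" and "card \<tau> = n" for x
    proof (rule supp)
      have "finite \<tau>" and "\<tau> \<noteq> {}" using that fin \<open>0 < n\<close> finite_subset by auto
      then have "\<not> (\<forall>x\<in>\<tau>. \<forall>y\<in>\<tau>. E x y)" using that False unfolding clique_complex_def by auto
      then show "insert x \<tau> \<notin> ?K" unfolding clique_complex_def by auto
    qed
    then show ?thesis using False unfolding bd_def aug_boundary_def by auto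
  qed
qed

lemma not_reduced_acyclic_if_homology_iso_field:
  fixes F :: "'a::field itself" and E :: "'v::linorder \<Rightarrow> 'v \<Rightarrow> bool"
  assumes fin: "finite X" and iso: "homology_iso_field F (clique_complex X E) (Suc m)"
  shows "\<not> reduced_acyclic F X E (Suc m)"
proof
  assume acyclic: "reduced_acyclic F X E (Suc m)"
  obtain z :: "'v set \<Rightarrow> 'a" where z: "z \<in> cycles F (clique_complex X E) (Suc m)"
    and not_boundary: "z \<notin> boundaries F (clique_complex X E) (Suc m)"
    using iso unfolding homology_iso_field_def by blast
  have zc: "z \<in> clique_chains X E (Suc m)" using z unfolding cycles_def chains_clique_complex by simp
  then have "aug_boundary X (Suc m) z = (\<lambda>_. 0)"
    using z bd_clique_complex[OF fin zc] unfolding cycles_def by simp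
  then obtain e where e: "e \<in> clique_chains X E (Suc (Suc m))" and "aug_boundary X (Suc (Suc m)) e = z"
    using acyclic zc unfolding reduced_acyclic_def by blast
  then have "z = bd (clique_complex X E) (Suc (Suc m)) e" using bd_clique_complex[OF fin e] by simp
  then show False using not_boundary e unfolding boundaries_def chains_clique_complex by blast
qed

lemma induced_iso_refl:
  fixes F :: "'a::field itself" and K :: "'v::linorder set set"
  shows "induced_iso F K K n"
proof -
  have "(\<lambda>\<sigma>. w \<sigma> - w \<sigma>) \<in> boundaries F K n" for w :: "'v set \<Rightarrow> 'a"
  proof -
    have "(\<lambda>\<sigma>. w \<sigma> - w \<sigma>) = bd K (Suc n) (\<lambda>_. 0)" by (simp add: bd_zero)
    moreover have "(\<lambda>_. 0) \<in> chains F K (Suc n)" unfolding chains_def by simp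
    ultimately show ?thesis unfolding boundaries_def by blast
  qed
  then show ?thesis unfolding induced_iso_def by blast
qed

text \<open>In degree 0 the homology is not reduced: \<open>H\<^sub>0 \<cong> F\<close> means connected.\<close>
lemma (in refl_sym_graph) edge_if_homology_iso_field_0:
  fixes F :: "'a::field itself"
  assumes X: "X = {x, y}" and "x \<noteq> y" and iso: "homology_iso_field F (clique_complex X E) 0"
  shows "E x y"
proof (rule ccontr)
  assume no_edge: "\<not> E x y"
  let ?K = "clique_complex X E"
  have no_1_chains: "c = (\<lambda>_. 0)" if "c \<in> clique_chains X E (Suc 0)" for c :: "'v set \<Rightarrow> 'a"
  proof (rule ext, rule ccontr)
    fix \<sigma> assume "c \<sigma> \<noteq> 0"
    then have "\<sigma> \<subseteq> X" and "card \<sigma> = 2" and clique: "\<forall>u\<in>\<sigma>. \<forall>v\<in>\<sigma>. E u v"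
      using clique_chainsD[OF that] by auto
    then have "\<sigma> = X" using X \<open>x \<noteq> y\<close> by (intro card_subset_eq) auto
    then show False using clique no_edge X by blast
  qed
  have no_boundaries: "b = (\<lambda>_. 0)" if "b \<in> boundaries F ?K 0" for b
    using that unfolding boundaries_def chains_clique_complex by (auto dest!: no_1_chains simp: bd_zero)
  have cycle: "c \<in> cycles F ?K 0" if "c \<in> clique_chains X E 0" for c :: "'v set \<Rightarrow> 'a"
    using that unfolding cycles_def chains_clique_complex by (auto simp: bd_def clique_complex_def fun_eq_iff)
  obtain z where spans: "\<forall>w\<in>cycles F ?K 0. \<exists>r::'a. (\<lambda>\<sigma>. w \<sigma> - r * z \<sigma>) \<in> boundaries F ?K 0"
    using iso unfolding homology_iso_field_def by blast
  have indicator: "\<exists>r. \<forall>\<sigma>. (if \<sigma> = {u} then 1 else 0) = r * z \<sigma>" if "u \<in> X" for u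
  proof -
    have u_cycle: "(\<lambda>\<sigma>. if \<sigma> = {u} then 1 else 0 :: 'a) \<in> cycles F ?K 0"
      using that refl by (intro cycle) (simp add: clique_chains_def)
    then obtain r where "(\<lambda>\<sigma>. (if \<sigma> = {u} then 1 else 0) - r * z \<sigma>) \<in> boundaries F ?K 0"
      using bspec[OF spans u_cycle] by auto
    then have "(\<lambda>\<sigma>. (if \<sigma> = {u} then 1 else 0) - r * z \<sigma>) = (\<lambda>_. 0)" by (rule no_boundaries)
    then show ?thesis by (auto simp: fun_eq_iff)
  qed
  obtain r where r: "\<forall>\<sigma>. (if \<sigma> = {x} then 1 else 0) = r * z \<sigma>" using indicator X by auto
  obtain s where s: "\<forall>\<sigma>. (if \<sigma> = {y} then 1 else 0) = s * z \<sigma>" using indicator X by auto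
  have "r * z {x} = 1" using r[rule_format, of "{x}"] by simp
  moreover have "r * z {y} = 0" using r[rule_format, of "{y}"] \<open>x \<noteq> y\<close> by simp
  ultimately have "z {y} = 0" by auto
  then show False using s[rule_format, of "{y}"] by simp
qed

lemma clique_complex_eq_if_homology_iso_field:
  fixes F :: "'a::field itself" and E E' :: "'v::linorder \<Rightarrow> 'v \<Rightarrow> bool"
  assumes G: "refl_sym_graph E" and G': "refl_sym_graph E'"
    and fin: "finite X" and card: "card X = 2 * k + 2"
    and sub: "\<And>x y. x \<in> X \<Longrightarrow> y \<in> X \<Longrightarrow> E x y \<Longrightarrow> E' x y"
    and iso: "homology_iso_field F (clique_complex X E) k"
    and iso': "homology_iso_field F (clique_complex X E') k"
  shows "clique_complex X E = clique_complex X E'"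
proof -
  have "E x y" if xX: "x \<in> X" and yX: "y \<in> X" and "E' x y" for x y
  proof (cases k)
    case 0
    then obtain a b where X: "X = {a, b}" and "a \<noteq> b" using card 0 card_2_iff[of X] by auto
    then have "E a b" using refl_sym_graph.edge_if_homology_iso_field_0[OF G] iso 0 by blast
    then show ?thesis
      using X xX yX refl_sym_graph.refl[OF G] refl_sym_graph.sym[OF G, of b a] by auto
  next
    case (Suc m)
    show ?thesis
    proof (rule ccontr)
      assume "\<not> E x y"
      have card': "card X = 2 * Suc m + 2" using card Suc by simp
      have "\<not> reduced_acyclic F X E' (Suc m)"
        using not_reduced_acyclic_if_homology_iso_field[OF fin] iso' Suc by simp
      then obtain u where uX: "u \<in> X" and "u \<noteq> x" and "\<not> E' x u"
        by (rule refl_sym_graph.non_neighbour_if_not_reduced_acyclic[OF G' fin _ xX])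
      then have "\<not> E x u" using sub xX by blast
      moreover have "\<not> reduced_acyclic F X E (Suc m)"
        using not_reduced_acyclic_if_homology_iso_field[OF fin] iso Suc by simp
      ultimately have "u = y"
        using refl_sym_graph.non_neighbour_unique_if_not_reduced_acyclic[OF G fin card' _ xX uX yX]
          \<open>\<not> E x y\<close> by blast
      then show False using \<open>\<not> E' x u\<close> \<open>E' x y\<close> by simp
    qed
  qed
  then have "(\<forall>x\<in>\<sigma>. \<forall>y\<in>\<sigma>. E x y) \<longleftrightarrow> (\<forall>x\<in>\<sigma>. \<forall>y\<in>\<sigma>. E' x y)" if "\<sigma> \<subseteq> X" for \<sigma>
    using sub that by blast
  then show ?thesis unfolding clique_complex_def by auto
qed

section \<open>Rips complexes as flag complexes\<close>

text \<open>Made reflexive and symmetric so that it is a graph on the whole type; on \<open>X\<close>, where every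
  \<open>d t\<close> is a pseudometric, neither change matters.\<close>
definition rips_graph :: "(real \<Rightarrow> 'v \<Rightarrow> 'v \<Rightarrow> real) \<Rightarrow> dyn \<Rightarrow> 'v \<Rightarrow> 'v \<Rightarrow> bool" where
  "rips_graph d p x y \<longleftrightarrow> x = y \<or>
     (interval_dist d (fst (fst p)) (snd (fst p)) x y \<le> snd p \<and>
      interval_dist d (fst (fst p)) (snd (fst p)) y x \<le> snd p)"

lemma refl_sym_graph_rips_graph: "refl_sym_graph (rips_graph d p)"
  by unfold_locales (auto simp: rips_graph_def)

lemma interval_dist_self:
  assumes "is_DMS X d" and "x \<in> X" and "a \<le> b"
  shows "interval_dist d a b x x = 0"
proof -
  have "(\<lambda>t. d t x x) ` {a..b} = {0}"
    using assms unfolding is_DMS_def pseudometric_on_def by auto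
  then show ?thesis unfolding interval_dist_def by simp
qed

lemma interval_dist_antimono:
  assumes "is_DMS X d" and "x \<in> X" and "y \<in> X" and "a \<le> b" and "{a..b} \<subseteq> {a'..b'}"
  shows "interval_dist d a' b' x y \<le> interval_dist d a b x y"
  unfolding interval_dist_def
proof (rule cInf_superset_mono)
  show "(\<lambda>t. d t x y) ` {a..b} \<noteq> {}" using assms(4) by simp
  have "\<forall>t. 0 \<le> d t x y" using assms unfolding is_DMS_def pseudometric_on_def by blast
  then show "bdd_below ((\<lambda>t. d t x y) ` {a'..b'})" by (intro bdd_belowI[of _ 0]) auto
  show "(\<lambda>t. d t x y) ` {a..b} \<subseteq> (\<lambda>t. d t x y) ` {a'..b'}" using assms(5) by auto
qed

lemma rips_lev_eq_clique_complex:
  assumes "is_DMS X d" and "dyn_point p"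
  shows "rips_lev X d p = clique_complex X (rips_graph d p)"
proof -
  let ?D = "interval_dist d (fst (fst p)) (snd (fst p))"
  have "?D x x \<le> snd p" if "x \<in> X" for x
    using interval_dist_self[OF assms(1) that] assms(2) unfolding dyn_point_def by simp
  then have "?D x y \<le> snd p \<and> ?D y x \<le> snd p \<longleftrightarrow> rips_graph d p x y"
    if "x \<in> X" for x y
    using that unfolding rips_graph_def by auto
  then have "(\<forall>x\<in>\<sigma>. \<forall>y\<in>\<sigma>. ?D x y \<le> snd p) \<longleftrightarrow> (\<forall>x\<in>\<sigma>. \<forall>y\<in>\<sigma>. rips_graph d p x y)"
    if "\<sigma> \<subseteq> X" for \<sigma>
    using that by blast
  then show ?thesis unfolding rips_lev_def rips_def clique_complex_def by auto
qed

lemma rips_graph_mono: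
  assumes "is_DMS X d" and "dyn_point p" and "dyn_le p q"
    and "x \<in> X" and "y \<in> X" and "rips_graph d p x y"
  shows "rips_graph d q x y"
proof -
  have "fst (fst p) \<le> snd (fst p)" and "{fst (fst p)..snd (fst p)} \<subseteq> {fst (fst q)..snd (fst q)}"
    and "snd p \<le> snd q"
    using assms(2,3) unfolding dyn_point_def dyn_le_def by auto
  then show ?thesis
    using assms(6) interval_dist_antimono[OF assms(1,4,5)] interval_dist_antimono[OF assms(1,5,4)]
    unfolding rips_graph_def by fastforce
qed

theorem mainTheorem1:
  fixes F :: "'a::field itself"
    and X :: "'v::linorder set"
    and d :: "real \<Rightarrow> 'v \<Rightarrow> 'v \<Rightarrow> real"
    and k :: nat
    and p q :: dyn
  assumes "is_DMS X d"
    and "card X = 2 * k + 2"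
    and "in_supp F X d k p"
    and "in_supp F X d k q"
    and "dyn_le p q"
  shows "rips_lev X d p = rips_lev X d q \<and> induced_iso F (rips_lev X d p) (rips_lev X d q) k"
proof -
  have "finite X" using assms(1) unfolding is_DMS_def by simp
  have "dyn_point p" and "dyn_point q" using assms(3,4) unfolding in_supp_def by auto
  then have Rp: "rips_lev X d p = clique_complex X (rips_graph d p)"
    and Rq: "rips_lev X d q = clique_complex X (rips_graph d q)"
    using rips_lev_eq_clique_complex[OF assms(1)] by auto
  have "clique_complex X (rips_graph d p) = clique_complex X (rips_graph d q)"
  proof (rule clique_complex_eq_if_homology_iso_field[OF refl_sym_graph_rips_graph
        refl_sym_graph_rips_graph \<open>finite X\<close> assms(2)])
    show "rips_graph d q x y" if "x \<in> X" "y \<in> X" "rips_graph d p x y" for x y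
      using rips_graph_mono[OF assms(1) \<open>dyn_point p\<close> assms(5) that] .
    show "homology_iso_field F (clique_complex X (rips_graph d p)) k"
      and "homology_iso_field F (clique_complex X (rips_graph d q)) k"
      using assms(3,4) Rp Rq unfolding in_supp_def by simp_all
  qed
  then show ?thesis using Rp Rq induced_iso_refl by simp
qed

end
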